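(* Let $R$ be a ring with identity and $a\in R$. Then: (i) there exists a positive integer $n$ such that $a$ is left $(a^n,1)$-invertible if and only if $a$ is left $\pi$-regular; (ii) there exists a positive integer $n$ such that $a$ is right $(1,a^n)$-invertible if and only if $a$ is right $\pi$-regular; (iii) $a$ is strongly $\pi$-regular (equivalently, Drazin invertible) if and only if there exists a positive integer $n$ such that $a$ is left $(a^n,1)$-invertible and right $(1,a^n)$-invertible.
   Context: For $x\in R$: $xR=\{xr:r\in R\}$, $Rx=\{rx:r\in R\}$. For $a,b,c\in R$, $a$ is left $(b,c)$-invertible if there is $y$ with $Ry\subseteq Rc$ and $yab=b$; right $(b,c)$-invertible if there is $y$ with $yR\subseteq bR$ and $cay=c$. The element $a$ is left (resp. right) $\pi$-regular if there exist $x\in R$ and a positive integer $n$ with $a^n=xa^{n+1}$ (resp. $a^n=a^{n+1}x$); it is strongly $\pi$-regular if it is both left and right $\pi$-regular. *)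

theory Defs
  imports Main
begin

definition left_bc_invertible :: "'a::ring_1 \<Rightarrow> 'a \<Rightarrow> 'a \<Rightarrow> bool" where
  "left_bc_invertible a b c \<longleftrightarrow>
     (\<exists>y. {r * y | r. True} \<subseteq> {r * c | r. True} \<and> y * a * b = b)"

definition right_bc_invertible :: "'a::ring_1 \<Rightarrow> 'a \<Rightarrow> 'a \<Rightarrow> bool" where
  "right_bc_invertible a b c \<longleftrightarrow>
     (\<exists>y. {y * r | r. True} \<subseteq> {b * r | r. True} \<and> c * a * y = c)"

definition left_pi_regular :: "'a::ring_1 \<Rightarrow> bool" where
  "left_pi_regular a \<longleftrightarrow> (\<exists>x. \<exists>n::nat. n > 0 \<and> a ^ n = x * a ^ (n + 1))"

definition right_pi_regular :: "'a::ring_1 \<Rightarrow> bool" where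
  "right_pi_regular a \<longleftrightarrow> (\<exists>x. \<exists>n::nat. n > 0 \<and> a ^ n = a ^ (n + 1) * x)"

definition strongly_pi_regular :: "'a::ring_1 \<Rightarrow> bool" where
  "strongly_pi_regular a \<longleftrightarrow> left_pi_regular a \<and> right_pi_regular a"

end

theory Submission
  imports Defs
begin

text \<open>With \<open>c = 1\<close> (resp. \<open>b = 1\<close>) the ideal inclusion in the definition of \<open>(b,c)\<close>-invertibility
  is vacuous, so left \<open>(a\<^sup>n,1)\<close>-invertibility says exactly \<open>a\<^sup>n \<in> R a\<^sup>n\<^sup>+\<^sup>1\<close> and right
  \<open>(1,a\<^sup>n)\<close>-invertibility says \<open>a\<^sup>n \<in> a\<^sup>n\<^sup>+\<^sup>1 R\<close>. Both conditions persist to larger exponents, so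
  the left and right indices of a strongly \<open>\<pi>\<close>-regular element can be made equal.\<close>

lemma left_bc_invertible_power_one_iff:
  fixes a :: "'a::ring_1"
  shows "left_bc_invertible a (a ^ n) 1 \<longleftrightarrow> (\<exists>x. a ^ n = x * a ^ (n + 1))"
proof -
  have "y * a * a ^ n = y * a ^ (n + 1)" for y
    by (simp add: mult.assoc)
  moreover have "{r * y | r. True} \<subseteq> {r * 1 | r. True}" for y :: 'a
    by auto
  ultimately show ?thesis
    unfolding left_bc_invertible_def by metis
qed

lemma right_bc_invertible_one_power_iff:
  fixes a :: "'a::ring_1"
  shows "right_bc_invertible a 1 (a ^ n) \<longleftrightarrow> (\<exists>x. a ^ n = a ^ (n + 1) * x)"
proof -
  have "a ^ n * a * y = a ^ (n + 1) * y" for y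
    by (simp add: power_commutes)
  moreover have "{y * r | r. True} \<subseteq> {1 * r | r. True}" for y :: 'a
    by auto
  ultimately show ?thesis
    unfolding right_bc_invertible_def by metis
qed

lemma power_eq_mult_power_Suc_left_mono:
  fixes a :: "'a::monoid_mult"
  assumes "a ^ n = x * a ^ (n + 1)" and "n \<le> m"
  shows "a ^ m = x * a ^ (m + 1)"
proof -
  obtain k where m: "m = n + k"
    using \<open>n \<le> m\<close> le_Suc_ex by blast
  have "a ^ m = a ^ n * a ^ k"
    unfolding m by (rule power_add)
  also have "\<dots> = x * (a ^ (n + 1) * a ^ k)"
    using assms(1) by (simp only: mult.assoc)
  also have "\<dots> = x * a ^ (m + 1)"
    unfolding m by (simp only: power_add [symmetric] add.commute add.left_commute)
  finally show ?thesis .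
qed

lemma power_eq_power_Suc_mult_right_mono:
  fixes a :: "'a::monoid_mult"
  assumes "a ^ n = a ^ (n + 1) * x" and "n \<le> m"
  shows "a ^ m = a ^ (m + 1) * x"
proof -
  obtain k where m: "m = k + n"
    using \<open>n \<le> m\<close> le_Suc_ex add.commute by metis
  have "a ^ m = a ^ k * a ^ n"
    unfolding m by (rule power_add)
  also have "\<dots> = (a ^ k * a ^ (n + 1)) * x"
    using assms(1) by (simp only: mult.assoc)
  also have "\<dots> = a ^ (m + 1) * x"
    unfolding m by (simp only: power_add [symmetric] add.assoc)
  finally show ?thesis .
qed

lemma strongly_pi_regular_iff_common_index:
  fixes a :: "'a::ring_1"
  shows "strongly_pi_regular a \<longleftrightarrow>
    (\<exists>n>0. (\<exists>x. a ^ n = x * a ^ (n + 1)) \<and> (\<exists>y. a ^ n = a ^ (n + 1) * y))"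
proof
  assume "strongly_pi_regular a"
  then obtain x n y m where "n > 0" and left: "a ^ n = x * a ^ (n + 1)"
    and right: "a ^ m = a ^ (m + 1) * y"
    unfolding strongly_pi_regular_def left_pi_regular_def right_pi_regular_def by blast
  have "a ^ max n m = x * a ^ (max n m + 1)"
    by (rule power_eq_mult_power_Suc_left_mono [OF left]) simp
  moreover have "a ^ max n m = a ^ (max n m + 1) * y"
    by (rule power_eq_power_Suc_mult_right_mono [OF right]) simp
  moreover have "max n m > 0"
    using \<open>n > 0\<close> by simp
  ultimately show "\<exists>n>0. (\<exists>x. a ^ n = x * a ^ (n + 1)) \<and> (\<exists>y. a ^ n = a ^ (n + 1) * y)"
    by blast
next
  assume "\<exists>n>0. (\<exists>x. a ^ n = x * a ^ (n + 1)) \<and> (\<exists>y. a ^ n = a ^ (n + 1) * y)"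
  then show "strongly_pi_regular a"
    unfolding strongly_pi_regular_def left_pi_regular_def right_pi_regular_def by blast
qed

theorem proposition2p18:
  fixes a :: "'a::ring_1"
  shows "((\<exists>n::nat. n > 0 \<and> left_bc_invertible a (a ^ n) 1) \<longleftrightarrow> left_pi_regular a)
       \<and> ((\<exists>n::nat. n > 0 \<and> right_bc_invertible a 1 (a ^ n)) \<longleftrightarrow> right_pi_regular a)
       \<and> (strongly_pi_regular a \<longleftrightarrow>
            (\<exists>n::nat. n > 0 \<and> left_bc_invertible a (a ^ n) 1 \<and> right_bc_invertible a 1 (a ^ n)))"
  unfolding left_bc_invertible_power_one_iff right_bc_invertible_one_power_iff
    strongly_pi_regular_iff_common_index left_pi_regular_def right_pi_regular_def
  by (intro conjI iffI) blast+

end
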